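(* Let $G$ be a graph with $V(G)=\{u_1,\ldots,u_n\}$ such that $\{u_1,\ldots,u_\ell\}$ induces a clique in $G$ and $\ell<n$. If $H_1,\ldots,H_\ell$ are pairwise disjoint complete graphs and $H_{\ell+1},\ldots,H_n$ are pairwise disjoint graphs (all $H_1,\ldots,H_n$ pairwise disjoint), then $box(G[H_1,H_2,\ldots,H_n])\leq \sum_{i=\ell+1}^{n} box(H_i)$.
   Context: All graphs are simple, finite and undirected. For a graph $G$ with vertex set $\{u_1,\ldots,u_n\}$ and pairwise disjoint graphs $H_1,\ldots,H_n$, the $G$-generalized join $G[H_1,\ldots,H_n]$ is the graph obtained from $G$ by replacing each vertex $u_i$ by $H_i$ and joining every vertex of $H_i$ to every vertex of $H_j$ whenever $u_i$ is adjacent to $u_j$ in $G$. The boxicity $box(G)$ is the least positive integer $\ell$ such that $G$ is isomorphic to the intersection graph of a family of $\ell$-boxes (Cartesian products of $\ell$ closed bounded real intervals). *)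

theory Defs
  imports Main "HOL.Real"
begin

type_synonym 'a graph = "'a set \<times> ('a \<Rightarrow> 'a \<Rightarrow> bool)"

definition verts :: "'a graph \<Rightarrow> 'a set" where "verts G = fst G"
definition adj :: "'a graph \<Rightarrow> 'a \<Rightarrow> 'a \<Rightarrow> bool" where "adj G = snd G"

definition is_graph :: "'a graph \<Rightarrow> bool" where
  "is_graph G \<longleftrightarrow> finite (verts G)
     \<and> (\<forall>x y. adj G x y \<longrightarrow> x \<in> verts G \<and> y \<in> verts G)
     \<and> (\<forall>x y. adj G x y \<longrightarrow> adj G y x)
     \<and> (\<forall>x. \<not> adj G x x)"

definition is_complete :: "'a graph \<Rightarrow> bool" where
  "is_complete G \<longleftrightarrow> (\<forall>x\<in>verts G. \<forall>y\<in>verts G. x \<noteq> y \<longrightarrow> adj G x y)"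

text \<open>The k-box with lower corner lo and upper corner hi, as a subset of R^k
  (points represented as functions nat to real vanishing at coordinates \<ge> k).\<close>
definition kbox :: "nat \<Rightarrow> (nat \<Rightarrow> real) \<Rightarrow> (nat \<Rightarrow> real) \<Rightarrow> (nat \<Rightarrow> real) set" where
  "kbox k lo hi = {x. (\<forall>i<k. lo i \<le> x i \<and> x i \<le> hi i) \<and> (\<forall>i\<ge>k. x i = 0)}"

definition box_rep :: "nat \<Rightarrow> 'a graph \<Rightarrow> ('a \<Rightarrow> (nat \<Rightarrow> real) \<times> (nat \<Rightarrow> real)) \<Rightarrow> bool" where
  "box_rep k G f \<longleftrightarrow>
     (\<forall>v\<in>verts G. \<forall>i<k. fst (f v) i \<le> snd (f v) i)
     \<and> (\<forall>u\<in>verts G. \<forall>v\<in>verts G. u \<noteq> v \<longrightarrow>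
          (adj G u v \<longleftrightarrow> kbox k (fst (f u)) (snd (f u)) \<inter> kbox k (fst (f v)) (snd (f v)) \<noteq> {}))"

definition boxicity :: "'a graph \<Rightarrow> nat" where
  "boxicity G = (LEAST k. 0 < k \<and> (\<exists>f. box_rep k G f))"

text \<open>Generalized join G[H_1,...,H_n], where u : {1..n} \<rightarrow> V(G) enumerates V(G).\<close>
definition gen_join :: "'b graph \<Rightarrow> nat \<Rightarrow> (nat \<Rightarrow> 'b) \<Rightarrow> (nat \<Rightarrow> 'a graph) \<Rightarrow> 'a graph" where
  "gen_join G n u H =
     ((\<Union>i\<in>{1..n}. verts (H i)),
      (\<lambda>x y. (\<exists>i\<in>{1..n}. x \<in> verts (H i) \<and> y \<in> verts (H i) \<and> adj (H i) x y)
           \<or> (\<exists>i\<in>{1..n}. \<exists>j\<in>{1..n}. i \<noteq> j \<and> x \<in> verts (H i) \<and> y \<in> verts (H j)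
                 \<and> adj G (u i) (u j))))"

end

theory Submission
  imports Defs Complex_Main
begin

(* Every part H_i with i > l gets its own block of box(H_i) coordinates.  In that block
   the vertices of H_i keep their boxes, squeezed into (-2, 2) by arctan, while a vertex
   of another part H_j becomes the cube [-2, 2]^box(H_i) if u_j is adjacent to u_i and
   the corner point (2, ..., 2) otherwise.  Two vertices of different parts then meet in
   every block except those of their own parts, where they meet iff their parts are
   adjacent in G.  As H_1, ..., H_l are complete and pairwise joined, these blocks decide
   every adjacency of the join, and their concatenation is a box representation of it. *)

definition box_rep_on ::
  "nat \<Rightarrow> 'a set \<Rightarrow> ('a \<Rightarrow> 'a \<Rightarrow> bool) \<Rightarrow> ('a \<Rightarrow> (nat \<Rightarrow> real) \<times> (nat \<Rightarrow> real)) \<Rightarrow> bool"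
where
  "box_rep_on k V R f \<longleftrightarrow> (\<forall>v\<in>V. \<forall>c<k. fst (f v) c \<le> snd (f v) c) \<and>
     (\<forall>x\<in>V. \<forall>y\<in>V. x \<noteq> y \<longrightarrow>
        (R x y \<longleftrightarrow> (\<forall>c<k. fst (f x) c \<le> snd (f y) c \<and> fst (f y) c \<le> snd (f x) c)))"

lemma kbox_Int_nonempty_iff:
  "kbox k lo1 hi1 \<inter> kbox k lo2 hi2 \<noteq> {} \<longleftrightarrow> (\<forall>c<k. max (lo1 c) (lo2 c) \<le> min (hi1 c) (hi2 c))"
proof
  assume "kbox k lo1 hi1 \<inter> kbox k lo2 hi2 \<noteq> {}"
  then obtain x where "x \<in> kbox k lo1 hi1" "x \<in> kbox k lo2 hi2" by blast
  then show "\<forall>c<k. max (lo1 c) (lo2 c) \<le> min (hi1 c) (hi2 c)"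
    unfolding kbox_def by force
next
  assume overlap: "\<forall>c<k. max (lo1 c) (lo2 c) \<le> min (hi1 c) (hi2 c)"
  have "(\<lambda>c. if c < k then max (lo1 c) (lo2 c) else 0) \<in> kbox k lo1 hi1 \<inter> kbox k lo2 hi2"
    using overlap unfolding kbox_def by auto
  then show "kbox k lo1 hi1 \<inter> kbox k lo2 hi2 \<noteq> {}" by blast
qed

lemma box_rep_iff_box_rep_on: "box_rep k G f \<longleftrightarrow> box_rep_on k (verts G) (adj G) f"
proof -
  have "(\<forall>c<k. max (lo1 c) (lo2 c) \<le> min (hi1 c) (hi2 c)) \<longleftrightarrow>
      (\<forall>c<k. lo1 c \<le> hi2 c \<and> lo2 c \<le> hi1 c)"
    if "\<forall>c<k. lo1 c \<le> hi1 c" "\<forall>c<k. lo2 c \<le> hi2 c" for lo1 lo2 hi1 hi2 :: "nat \<Rightarrow> real"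
    using that by auto
  then show ?thesis
    unfolding box_rep_def box_rep_on_def kbox_Int_nonempty_iff by blast
qed

lemma box_rep_on_True: "box_rep_on k V (\<lambda>_ _. True) (\<lambda>_. (\<lambda>_. 0, \<lambda>_. 0))"
  unfolding box_rep_on_def by simp

lemma box_rep_on_cong:
  assumes "box_rep_on k V R f"
    and "\<And>x y. x \<in> V \<Longrightarrow> y \<in> V \<Longrightarrow> x \<noteq> y \<Longrightarrow> S x y \<longleftrightarrow> R x y"
  shows "box_rep_on k V S f"
  using assms unfolding box_rep_on_def by blast

lemma all_less_add_iff:
  "(\<forall>c < (k1::nat) + k2. P c) \<longleftrightarrow> (\<forall>c<k1. P c) \<and> (\<forall>c<k2. P (k1 + c))"
  by (metis add_diff_inverse_nat nat_add_left_cancel_less trans_less_add1)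

lemma box_rep_on_conj:
  assumes "box_rep_on k1 V R1 f1" and "box_rep_on k2 V R2 f2"
  shows "\<exists>f. box_rep_on (k1 + k2) V (\<lambda>x y. R1 x y \<and> R2 x y) f"
proof -
  let ?app = "\<lambda>p q c. if c < k1 then p c else q (c - k1)"
  have "box_rep_on (k1 + k2) V (\<lambda>x y. R1 x y \<and> R2 x y)
      (\<lambda>v. (?app (fst (f1 v)) (fst (f2 v)), ?app (snd (f1 v)) (snd (f2 v))))"
    using assms unfolding box_rep_on_def all_less_add_iff by auto
  then show ?thesis by blast
qed

lemma box_rep_on_Ball:
  assumes "finite I" and "\<forall>i\<in>I. box_rep_on (k i) V (R i) (f i)"
  shows "\<exists>g. box_rep_on (\<Sum>i\<in>I. k i) V (\<lambda>x y. \<forall>i\<in>I. R i x y) g"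
  using assms
proof (induction I rule: finite_induct)
  case empty
  show ?case using box_rep_on_True by auto
next
  case (insert i I)
  then obtain g where g: "box_rep_on (\<Sum>i\<in>I. k i) V (\<lambda>x y. \<forall>i\<in>I. R i x y) g"
    by auto
  have "box_rep_on (k i) V (R i) (f i)"
    using insert.prems by simp
  from box_rep_on_conj[OF this g] show ?case
    using insert.hyps by simp
qed

lemma graph_has_box_rep:
  assumes "is_graph G"
  shows "\<exists>k>0. \<exists>f. box_rep k G f"
proof -
  let ?V = "verts G"
  have fin: "finite ?V" and adj_sym: "\<And>x y. adj G x y \<Longrightarrow> adj G y x"
    using assms unfolding is_graph_def by auto
  \<comment> \<open>One coordinate per vertex a: a is the point 0, its neighbours are [0, 1] and all
    other vertices the point 1.  A final constant coordinate keeps the dimension positive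
    when G has no vertices.\<close>
  define R where "R a x y \<longleftrightarrow> (if x = a then adj G a y else if y = a then adj G a x else True)"
    for a x y
  define f :: "'a \<Rightarrow> 'a \<Rightarrow> (nat \<Rightarrow> real) \<times> (nat \<Rightarrow> real)"
    where "f a v = (if v = a then (\<lambda>_. 0, \<lambda>_. 0)
      else if adj G a v then (\<lambda>_. 0, \<lambda>_. 1) else (\<lambda>_. 1, \<lambda>_. 1))" for a v
  have "\<forall>a\<in>?V. box_rep_on 1 ?V (R a) (f a)"
    unfolding box_rep_on_def R_def f_def by auto
  then obtain g where "box_rep_on (card ?V) ?V (\<lambda>x y. \<forall>a\<in>?V. R a x y) g"
    using box_rep_on_Ball[OF fin] by fastforce
  then have "box_rep_on (card ?V) ?V (adj G) g"
    by (rule box_rep_on_cong) (auto simp: R_def dest: adj_sym)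
  from box_rep_on_conj[OF this box_rep_on_True[of 1]]
  obtain h where "box_rep_on (card ?V + 1) ?V (\<lambda>x y. adj G x y \<and> True) h" ..
  then have "box_rep (card ?V + 1) G h"
    unfolding box_rep_iff_box_rep_on by (rule box_rep_on_cong) simp
  then show ?thesis by (intro exI[of _ "card ?V + 1"]) auto
qed

lemma boxicity_box_rep:
  assumes "is_graph G"
  shows "0 < boxicity G \<and> (\<exists>f. box_rep (boxicity G) G f)"
  unfolding boxicity_def by (rule LeastI_ex) (use graph_has_box_rep[OF assms] in auto)

lemma boxicity_le:
  assumes "0 < k" and "box_rep k G f"
  shows "boxicity G \<le> k"
  unfolding boxicity_def by (rule Least_le) (use assms in auto)

definition clique_extension :: "'a graph \<Rightarrow> ('a \<Rightarrow> bool) \<Rightarrow> 'a \<Rightarrow> 'a \<Rightarrow> bool" where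
  "clique_extension H N x y \<longleftrightarrow>
     (if x \<in> verts H \<and> y \<in> verts H then adj H x y
      else if x \<in> verts H then N y
      else if y \<in> verts H then N x
      else True)"

lemma arctan_gt_neg2: "-2 < arctan t"
  using arctan_bounded[of t] pi_less_4 by linarith

lemma arctan_lt_2: "arctan t < 2"
  using arctan_bounded[of t] pi_less_4 by linarith

lemma box_rep_on_clique_extension:
  assumes rep: "box_rep k H f" and "0 < k"
  shows "\<exists>g. box_rep_on k V (clique_extension H N) g"
proof -
  define g where "g x = (if x \<in> verts H then (\<lambda>c. arctan (fst (f x) c), \<lambda>c. arctan (snd (f x) c))
      else if N x then (\<lambda>_. -2, \<lambda>_. 2) else (\<lambda>_. 2, \<lambda>_. 2))" for x
  let ?meet = "\<lambda>x y. \<forall>c<k. fst (g x) c \<le> snd (g y) c \<and> fst (g y) c \<le> snd (g x) c"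
  have f: "box_rep_on k (verts H) (adj H) f"
    using rep box_rep_iff_box_rep_on by blast
  have meet_outside: "?meet x y \<longleftrightarrow> N y" if "x \<in> verts H" "y \<notin> verts H" for x y
  proof (cases "N y")
    case True
    then show ?thesis
      using that by (simp add: g_def arctan_gt_neg2 arctan_lt_2 less_imp_le)
  next
    case False
    then have "\<not> fst (g y) 0 \<le> snd (g x) 0"
      using that by (simp add: g_def arctan_lt_2 not_le)
    then show ?thesis using False \<open>0 < k\<close> by blast
  qed
  have meet_inside: "?meet x y \<longleftrightarrow> adj H x y" if "x \<in> verts H" "y \<in> verts H" "x \<noteq> y" for x y
    using f that unfolding box_rep_on_def by (simp add: g_def arctan_le_iff)
  have meet_far: "?meet x y" if "x \<notin> verts H" "y \<notin> verts H" for x y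
    using that by (simp add: g_def)
  have "box_rep_on k V (clique_extension H N) g"
    unfolding box_rep_on_def
  proof (intro conjI ballI allI impI)
    show "fst (g v) c \<le> snd (g v) c" if "c < k" for v c
      using f that unfolding box_rep_on_def by (simp add: g_def arctan_le_iff)
    show "clique_extension H N x y \<longleftrightarrow> ?meet x y" if "x \<noteq> y" for x y
      using meet_outside[of x y] meet_outside[of y x] meet_inside[OF _ _ that] meet_far[of x y]
      unfolding clique_extension_def by (auto simp: conj_commute)
  qed
  then show ?thesis by blast
qed

lemma part_unique:
  assumes "\<forall>i\<in>{1..n}. \<forall>j\<in>{1..n}. i \<noteq> j \<longrightarrow> verts (H i) \<inter> verts (H j) = {}"
    and "i \<in> {1..n}" "j \<in> {1..n}" "z \<in> verts (H i)" "z \<in> verts (H j)"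
  shows "i = j"
  using assms by blast

lemma verts_gen_join: "verts (gen_join G n u H) = (\<Union>i\<in>{1..n}. verts (H i))"
  unfolding gen_join_def verts_def by simp

lemma adj_gen_join_iff:
  assumes disjoint: "\<forall>i\<in>{1..n}. \<forall>j\<in>{1..n}. i \<noteq> j \<longrightarrow> verts (H i) \<inter> verts (H j) = {}"
    and p: "p \<in> {1..n}" "x \<in> verts (H p)" and q: "q \<in> {1..n}" "y \<in> verts (H q)"
  shows "adj (gen_join G n u H) x y \<longleftrightarrow> (if p = q then adj (H p) x y else adj G (u p) (u q))"
proof -
  have "adj (gen_join G n u H) x y \<longleftrightarrow>
      (\<exists>i\<in>{1..n}. x \<in> verts (H i) \<and> y \<in> verts (H i) \<and> adj (H i) x y) \<or>
      (\<exists>i\<in>{1..n}. \<exists>j\<in>{1..n}. i \<noteq> j \<and> x \<in> verts (H i) \<and> y \<in> verts (H j) \<and> adj G (u i) (u j))"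
    unfolding gen_join_def adj_def by simp
  also have "\<dots> \<longleftrightarrow> (p = q \<and> adj (H p) x y) \<or> (p \<noteq> q \<and> adj G (u p) (u q))"
    using part_unique[OF disjoint] p q by blast
  finally show ?thesis by simp
qed

definition joined_to_part ::
  "'b graph \<Rightarrow> nat \<Rightarrow> (nat \<Rightarrow> 'b) \<Rightarrow> (nat \<Rightarrow> 'a graph) \<Rightarrow> nat \<Rightarrow> 'a \<Rightarrow> bool" where
  "joined_to_part G n u H i z \<longleftrightarrow> (\<exists>j\<in>{1..n}. z \<in> verts (H j) \<and> adj G (u i) (u j))"

lemma adj_gen_join_iff_clique_extensions:
  assumes adj_sym: "\<And>a b. adj G a b \<Longrightarrow> adj G b a"
    and disjoint: "\<forall>i\<in>{1..n}. \<forall>j\<in>{1..n}. i \<noteq> j \<longrightarrow> verts (H i) \<inter> verts (H j) = {}"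
    and clique: "\<forall>i\<in>{1..n} - I. \<forall>j\<in>{1..n} - I. i \<noteq> j \<longrightarrow> adj G (u i) (u j)"
    and complete: "\<forall>i\<in>{1..n} - I. is_complete (H i)"
    and "I \<subseteq> {1..n}"
    and x: "x \<in> verts (gen_join G n u H)" and y: "y \<in> verts (gen_join G n u H)" and "x \<noteq> y"
  shows "adj (gen_join G n u H) x y \<longleftrightarrow>
    (\<forall>i\<in>I. clique_extension (H i) (joined_to_part G n u H i) x y)"
proof -
  let ?N = "joined_to_part G n u H"
  obtain p where p: "p \<in> {1..n}" "x \<in> verts (H p)"
    using x by (auto simp: verts_gen_join)
  obtain q where q: "q \<in> {1..n}" "y \<in> verts (H q)"
    using y by (auto simp: verts_gen_join)
  let ?join_adj = "if p = q then adj (H p) x y else adj G (u p) (u q)"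
  have N_iff: "?N i z \<longleftrightarrow> adj G (u i) (u j)" if "j \<in> {1..n}" "z \<in> verts (H j)" for i j z
    unfolding joined_to_part_def using part_unique[OF disjoint] that by blast
  have outside_p: "x \<notin> verts (H i)" if "i \<in> {1..n}" "i \<noteq> p" for i
    using part_unique[OF disjoint] p that by blast
  have outside_q: "y \<notin> verts (H i)" if "i \<in> {1..n}" "i \<noteq> q" for i
    using part_unique[OF disjoint] q that by blast
  have at_p: "clique_extension (H p) (?N p) x y \<longleftrightarrow> ?join_adj"
    using p q outside_q[OF p(1)] N_iff[OF q] unfolding clique_extension_def by auto
  have at_q: "clique_extension (H q) (?N q) x y \<longleftrightarrow> ?join_adj"
    using p q outside_p[OF q(1)] N_iff[OF p] adj_sym unfolding clique_extension_def by auto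
  have elsewhere: "clique_extension (H i) (?N i) x y" if "i \<in> {1..n}" "i \<noteq> p" "i \<noteq> q" for i
    using outside_p[OF that(1,2)] outside_q[OF that(1,3)] unfolding clique_extension_def by simp
  have "?join_adj" if "p \<notin> I" "q \<notin> I"
    using that p q clique complete \<open>x \<noteq> y\<close> unfolding is_complete_def by auto
  then have "(\<forall>i\<in>I. clique_extension (H i) (?N i) x y) \<longleftrightarrow> ?join_adj"
    using at_p at_q elsewhere \<open>I \<subseteq> {1..n}\<close> by blast
  moreover have "adj (gen_join G n u H) x y \<longleftrightarrow> ?join_adj"
    by (rule adj_gen_join_iff[OF disjoint p q])
  ultimately show ?thesis
    by simp
qed

lemma boxicity_gen_join_le:
  assumes "is_graph G"
    and "I \<subseteq> {1..n}" and "I \<noteq> {}"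
    and clique: "\<forall>i\<in>{1..n} - I. \<forall>j\<in>{1..n} - I. i \<noteq> j \<longrightarrow> adj G (u i) (u j)"
    and graphs: "\<forall>i\<in>I. is_graph (H i)"
    and complete: "\<forall>i\<in>{1..n} - I. is_complete (H i)"
    and disjoint: "\<forall>i\<in>{1..n}. \<forall>j\<in>{1..n}. i \<noteq> j \<longrightarrow> verts (H i) \<inter> verts (H j) = {}"
  shows "boxicity (gen_join G n u H) \<le> (\<Sum>i\<in>I. boxicity (H i))"
proof -
  let ?J = "gen_join G n u H"
  let ?N = "joined_to_part G n u H"
  have fin: "finite I" using \<open>I \<subseteq> {1..n}\<close> finite_subset by blast
  have "\<exists>g. box_rep_on (boxicity (H i)) (verts ?J) (clique_extension (H i) (?N i)) g"
    if "i \<in> I" for i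
    using boxicity_box_rep graphs box_rep_on_clique_extension that by meson
  then obtain g where "\<forall>i\<in>I. box_rep_on (boxicity (H i)) (verts ?J) (clique_extension (H i) (?N i)) (g i)"
    by metis
  from box_rep_on_Ball[OF fin this] obtain f where f:
    "box_rep_on (\<Sum>i\<in>I. boxicity (H i)) (verts ?J) (\<lambda>x y. \<forall>i\<in>I. clique_extension (H i) (?N i) x y) f"
    ..
  have adj_sym: "\<And>a b. adj G a b \<Longrightarrow> adj G b a"
    using \<open>is_graph G\<close> unfolding is_graph_def by blast
  have "box_rep_on (\<Sum>i\<in>I. boxicity (H i)) (verts ?J) (adj ?J) f"
  proof (rule box_rep_on_cong[OF f])
    fix x y assume "x \<in> verts ?J" "y \<in> verts ?J" "x \<noteq> y"
    from adj_gen_join_iff_clique_extensions[OF adj_sym disjoint clique complete \<open>I \<subseteq> {1..n}\<close> this]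
    show "adj ?J x y \<longleftrightarrow> (\<forall>i\<in>I. clique_extension (H i) (?N i) x y)" .
  qed
  then have "box_rep (\<Sum>i\<in>I. boxicity (H i)) ?J f"
    unfolding box_rep_iff_box_rep_on .
  moreover have "0 < (\<Sum>i\<in>I. boxicity (H i))"
    by (intro sum_pos[OF fin \<open>I \<noteq> {}\<close>]) (simp add: boxicity_box_rep graphs)
  ultimately show ?thesis
    by (intro boxicity_le)
qed

theorem theorem3p4:
  fixes G :: "'b graph" and H :: "nat \<Rightarrow> 'a graph" and u :: "nat \<Rightarrow> 'b" and n l :: nat
  assumes "is_graph G"
    and "bij_betw u {1..n} (verts G)"
    and "1 \<le> l" and "l < n"
    and "\<forall>i\<in>{1..l}. \<forall>j\<in>{1..l}. i \<noteq> j \<longrightarrow> adj G (u i) (u j)"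
    and "\<forall>i\<in>{1..n}. is_graph (H i)"
    and "\<forall>i\<in>{1..l}. is_complete (H i)"
    and "\<forall>i\<in>{1..n}. \<forall>j\<in>{1..n}. i \<noteq> j \<longrightarrow> verts (H i) \<inter> verts (H j) = {}"
  shows "boxicity (gen_join G n u H) \<le> (\<Sum>i=l+1..n. boxicity (H i))"
proof (rule boxicity_gen_join_le)
  have "{1..n} - {l+1..n} = {1..l}" using \<open>l < n\<close> by auto
  then show "\<forall>i\<in>{1..n} - {l+1..n}. \<forall>j\<in>{1..n} - {l+1..n}. i \<noteq> j \<longrightarrow> adj G (u i) (u j)"
    and "\<forall>i\<in>{1..n} - {l+1..n}. is_complete (H i)"
    using assms(5,7) by simp_all
qed (use assms in auto)

end
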